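(* Let $\mathcal{S}=\langle\mathcal{L},\vdash\rangle$ be a logical structure and $\varrho,\sigma\subseteq\mathcal{P}(\mathcal{L})\times\mathcal{L}$. (i) $(\vdash^\varrho)^\sigma\,\subseteq\,\vdash^\varrho$, with equality if $\varrho\subseteq\sigma$. (ii) If $\mathcal{S}$ is monotonic, then $(\vdash^\varrho)^\sigma\,\subseteq\,\vdash^\sigma$. (iii) If $\varrho\subseteq\sigma$, then $(\vdash^\varrho)^\sigma\,\subseteq\,\vdash^\sigma$. (iv) If $\vdash^\sigma\,\subseteq\,\vdash^\varrho$, then $\vdash^\sigma\,\subseteq\,(\vdash^\varrho)^\sigma$. (v) If $\varrho\subseteq\sigma$, then $\vdash^\varrho\,=\,\vdash^\sigma$ iff $(\vdash^\varrho)^\sigma\,=\,\vdash^\sigma$. Moreover, statements (i)–(v) remain true when $\vdash^\varrho$, $\vdash^\sigma$ and $(\vdash^\varrho)^\sigma$ are replaced throughout by the pure companions $\vdash^{p\varrho}$, $\vdash^{p\sigma}$ and $(\vdash^{p\varrho})^{p\sigma}$ respectively.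
   Context: A logical structure is a pair $\langle\mathcal{L},\vdash\rangle$ with $\mathcal{L}$ a set and $\vdash\subseteq\mathcal{P}(\mathcal{L})\times\mathcal{L}$ arbitrary; it is monotonic if $\Gamma\vdash\alpha$ and $\Gamma\subseteq\Sigma$ imply $\Sigma\vdash\alpha$. For $\varrho\subseteq\mathcal{P}(\mathcal{L})\times\mathcal{L}$: $\Gamma\vdash^\varrho\alpha$ iff there is $\Delta\subseteq\Gamma$ with $(\Delta,\alpha)\in\varrho$ and $\Delta\vdash\alpha$; $\Gamma\vdash^{p\varrho}\alpha$ iff there is a nonempty $\Delta\subseteq\Gamma$ with $(\Delta,\alpha)\in\varrho$ and $\Delta\vdash\alpha$. $(\vdash^\varrho)^\sigma$ denotes the $\sigma$-companion of $\langle\mathcal{L},\vdash^\varrho\rangle$, and $(\vdash^{p\varrho})^{p\sigma}$ the pure $\sigma$-companion of $\langle\mathcal{L},\vdash^{p\varrho}\rangle$. *)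

theory Defs
  imports Main
begin

text \<open>A logical structure over the language given by the type 'a is a relation
  between sets of formulas and formulas.\<close>
type_synonym 'a cons_rel = "('a set \<times> 'a) set"

definition monotonic :: "'a cons_rel \<Rightarrow> bool" where
  "monotonic D \<longleftrightarrow> (\<forall>\<Gamma> \<Sigma> \<alpha>. (\<Gamma>, \<alpha>) \<in> D \<and> \<Gamma> \<subseteq> \<Sigma> \<longrightarrow> (\<Sigma>, \<alpha>) \<in> D)"

definition companion :: "'a cons_rel \<Rightarrow> 'a cons_rel \<Rightarrow> 'a cons_rel" where
  "companion D \<rho> = {(\<Gamma>, \<alpha>). \<exists>\<Delta>. \<Delta> \<subseteq> \<Gamma> \<and> (\<Delta>, \<alpha>) \<in> \<rho> \<and> (\<Delta>, \<alpha>) \<in> D}"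

definition pure_companion :: "'a cons_rel \<Rightarrow> 'a cons_rel \<Rightarrow> 'a cons_rel" where
  "pure_companion D \<rho> = {(\<Gamma>, \<alpha>). \<exists>\<Delta>. \<Delta> \<noteq> {} \<and> \<Delta> \<subseteq> \<Gamma> \<and> (\<Delta>, \<alpha>) \<in> \<rho> \<and> (\<Delta>, \<alpha>) \<in> D}"

end

theory Submission
  imports Defs
begin

text \<open>Both companions are instances of one construction that differs only in which
  witness sets \<open>\<Delta>\<close> are admitted. Every such companion is monotonic, and the
  companion of a monotonic relation is contained in it; taking a second companion along
  \<open>\<sigma> \<supseteq> \<rho>\<close> changes nothing, since each witness of the first companion
  witnesses itself again. Parts (i)--(v) follow from these facts and the monotonicity of
  the construction in both arguments.\<close>

definition companion_within :: "('a set \<Rightarrow> bool) \<Rightarrow> 'a cons_rel \<Rightarrow> 'a cons_rel \<Rightarrow> 'a cons_rel" where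
  "companion_within W D \<rho> = {(\<Gamma>, \<alpha>). \<exists>\<Delta>. W \<Delta> \<and> \<Delta> \<subseteq> \<Gamma> \<and> (\<Delta>, \<alpha>) \<in> \<rho> \<and> (\<Delta>, \<alpha>) \<in> D}"

lemma companion_eq_companion_within: "companion = companion_within (\<lambda>_. True)"
  unfolding companion_def companion_within_def by blast

lemma pure_companion_eq_companion_within:
  "pure_companion = companion_within (\<lambda>\<Delta>. \<Delta> \<noteq> {})"
  unfolding pure_companion_def companion_within_def by blast

lemma companion_within_mono_rel:
  "\<rho> \<subseteq> \<sigma> \<Longrightarrow> companion_within W D \<rho> \<subseteq> companion_within W D \<sigma>"
  unfolding companion_within_def by blast

lemma companion_within_mono:
  "D \<subseteq> D' \<Longrightarrow> companion_within W D \<rho> \<subseteq> companion_within W D' \<rho>"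
  unfolding companion_within_def by blast

lemma monotonic_companion_within: "monotonic (companion_within W D \<rho>)"
  unfolding monotonic_def companion_within_def by blast

lemma companion_within_subset:
  "monotonic D \<Longrightarrow> companion_within W D \<rho> \<subseteq> D"
  unfolding monotonic_def companion_within_def by blast

lemma companion_within_absorb:
  "\<rho> \<subseteq> \<sigma> \<Longrightarrow> companion_within W (companion_within W D \<rho>) \<sigma> = companion_within W D \<rho>"
  unfolding companion_within_def by blast

lemma companion_within_iterate_laws:
  fixes W :: "'a set \<Rightarrow> bool"
  defines "C \<equiv> companion_within W"
  shows
   "(C (C D \<rho>) \<sigma> \<subseteq> C D \<rho> \<and> (\<rho> \<subseteq> \<sigma> \<longrightarrow> C (C D \<rho>) \<sigma> = C D \<rho>))
    \<and> (monotonic D \<longrightarrow> C (C D \<rho>) \<sigma> \<subseteq> C D \<sigma>)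
    \<and> (\<rho> \<subseteq> \<sigma> \<longrightarrow> C (C D \<rho>) \<sigma> \<subseteq> C D \<sigma>)
    \<and> (C D \<sigma> \<subseteq> C D \<rho> \<longrightarrow> C D \<sigma> \<subseteq> C (C D \<rho>) \<sigma>)
    \<and> (\<rho> \<subseteq> \<sigma> \<longrightarrow> (C D \<rho> = C D \<sigma> \<longleftrightarrow> C (C D \<rho>) \<sigma> = C D \<sigma>))"
proof (intro conjI impI)
  show "C (C D \<rho>) \<sigma> \<subseteq> C D \<rho>"
    unfolding C_def by (intro companion_within_subset monotonic_companion_within)
  show absorb: "C (C D \<rho>) \<sigma> = C D \<rho>" if "\<rho> \<subseteq> \<sigma>"
    unfolding C_def using that by (rule companion_within_absorb)
  show "C (C D \<rho>) \<sigma> \<subseteq> C D \<sigma>" if "monotonic D"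
    unfolding C_def using that by (intro companion_within_mono companion_within_subset)
  show "C (C D \<rho>) \<sigma> \<subseteq> C D \<sigma>" if "\<rho> \<subseteq> \<sigma>"
    unfolding absorb[OF that] unfolding C_def using that by (rule companion_within_mono_rel)
  show "C D \<sigma> \<subseteq> C (C D \<rho>) \<sigma>" if "C D \<sigma> \<subseteq> C D \<rho>"
  proof -
    have "C D \<sigma> = C (C D \<sigma>) \<sigma>"
      unfolding C_def by (simp add: companion_within_absorb)
    also have "\<dots> \<subseteq> C (C D \<rho>) \<sigma>"
      unfolding C_def using that[unfolded C_def] by (rule companion_within_mono)
    finally show ?thesis .
  qed
  show "C D \<rho> = C D \<sigma> \<longleftrightarrow> C (C D \<rho>) \<sigma> = C D \<sigma>" if "\<rho> \<subseteq> \<sigma>"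
    using absorb[OF that] by simp
qed

theorem theorem3p10:
  fixes D \<rho> \<sigma> :: "'a cons_rel"
  shows
   "(companion (companion D \<rho>) \<sigma> \<subseteq> companion D \<rho>
      \<and> (\<rho> \<subseteq> \<sigma> \<longrightarrow> companion (companion D \<rho>) \<sigma> = companion D \<rho>))
    \<and> (monotonic D \<longrightarrow> companion (companion D \<rho>) \<sigma> \<subseteq> companion D \<sigma>)
    \<and> (\<rho> \<subseteq> \<sigma> \<longrightarrow> companion (companion D \<rho>) \<sigma> \<subseteq> companion D \<sigma>)
    \<and> (companion D \<sigma> \<subseteq> companion D \<rho> \<longrightarrow> companion D \<sigma> \<subseteq> companion (companion D \<rho>) \<sigma>)
    \<and> (\<rho> \<subseteq> \<sigma> \<longrightarrow>
        (companion D \<rho> = companion D \<sigma> \<longleftrightarrow> companion (companion D \<rho>) \<sigma> = companion D \<sigma>))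
    \<and> (pure_companion (pure_companion D \<rho>) \<sigma> \<subseteq> pure_companion D \<rho>
      \<and> (\<rho> \<subseteq> \<sigma> \<longrightarrow> pure_companion (pure_companion D \<rho>) \<sigma> = pure_companion D \<rho>))
    \<and> (monotonic D \<longrightarrow> pure_companion (pure_companion D \<rho>) \<sigma> \<subseteq> pure_companion D \<sigma>)
    \<and> (\<rho> \<subseteq> \<sigma> \<longrightarrow> pure_companion (pure_companion D \<rho>) \<sigma> \<subseteq> pure_companion D \<sigma>)
    \<and> (pure_companion D \<sigma> \<subseteq> pure_companion D \<rho> \<longrightarrow>
         pure_companion D \<sigma> \<subseteq> pure_companion (pure_companion D \<rho>) \<sigma>)
    \<and> (\<rho> \<subseteq> \<sigma> \<longrightarrow>
        (pure_companion D \<rho> = pure_companion D \<sigma> \<longleftrightarrow>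
         pure_companion (pure_companion D \<rho>) \<sigma> = pure_companion D \<sigma>))"
  unfolding companion_eq_companion_within pure_companion_eq_companion_within
  using companion_within_iterate_laws[of "\<lambda>_. True" D \<rho> \<sigma>]
    companion_within_iterate_laws[of "\<lambda>\<Delta>. \<Delta> \<noteq> {}" D \<rho> \<sigma>]
  by (elim conjE) (intro conjI; assumption)

end
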